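(* Let $M_C$ be a deterministic classical Turing machine operating in time $f(n)$, where $n$ is the input size. Then there exists a (one-tape) classically-controlled quantum Turing machine $M_Q$ operating in time $O(f(n))$ such that for every input $x$, $M_C(x)=M_Q(\ket{x})$; here, when $M_C$ halts in the halting state $h$, this equality is to be read as $M_Q(\ket{x})=\ket{M_C(x)}$ (the final state of the quantum tape is the basis state encoding the final classical tape contents).
   Context: A deterministic Turing machine (TM) is a triple $M=(K,\Sigma,\delta)$: $K$ finite set of states with initial state $s$, $\Sigma$ finite alphabet containing a blank $\#$, and $\delta: K\times\Sigma\to (K\cup\{\text{yes},\text{no},h\})\times\Sigma\times\{\leftarrow,\rightarrow,-\}$, where yes, no, $h$ (halting states) are not in $K$. Its output $M(x)$ is yes or no if that state is reached, and the final tape contents if $h$ is reached. A (one-tape) classically-controlled quantum Turing machine (CQTM) is a quintuple $M=(K,\Sigma_C,\Sigma_Q,\mathcal A,\delta)$. $K$ is a finite set of classical states with initial state $s$; $\Sigma_Q$ is a finite alphabet containing a blank $\#$, whose symbols label an orthonormal basis $\{\ket{\tau}:\tau\in\Sigma_Q\}$ of the Hilbert space $\mathbb C^{|\Sigma_Q|}$ of each quantum cell of an infinite tape; $\Sigma_C$ is a finite alphabet of classical outcomes containing $\#$ and $\overline{\#}$; $\mathcal A$ is a finite set of one-cell admissible transformations, each being a family $\{M_c\}_{c}$ of linear operators on $\mathbb C^{|\Sigma_Q|}$ with $\sum_c M_c^\dagger M_c=\mathrm{Id}$ and all outcomes $c\in\Sigma_C$, and $\mathcal A$ contains the blank test $\mathcal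 T_\#=\{M_\#=\ket{\#}\bra{\#},\,M_{\overline\#}=I-\ket{\#}\bra{\#}\}$; and $\delta:K\times\Sigma_C\to(K\cup\{\text{yes},\text{no},h\})\times\{\leftarrow,\rightarrow,-\}\times\mathcal A$ is a total classical transition function. If the machine is in state $q$ with last outcome $\tau$ and $\delta(q,\tau)=(p,D,A)$, the head moves according to $D$, then $A=\{M_c\}$ is applied to the pointed cell: if the tape state is $\ket\psi$, outcome $c$ occurs with probability $\bra\psi M_c^\dagger M_c\ket\psi$ (with $M_c$ acting on the pointed cell) and the tape becomes $M_c\ket\psi$ normalized; the new state is $p$ and the last outcome is $c$. Each transition is one time step. Initially the input state (a superposition of basis states $\ket{\tau}$ with $\tau\in(\Sigma_Q\setminus\{\#\})^n$) occupies $n$ adjacent cells, all other cells are in $\ket{\#}$, the head points at the blank cell immediately left of the input, the state is $s$ and the last outcome is taken to be $\#$. The machine halts upon reaching yes, no, or $h$; the output is yes/no respectively, or, on $h$, the state of the tape segment from the leftmost cell not in $\ket\#$ to the rightmost cell not in $\ket\#$. *)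

theory Defs
  imports Complex_Main
begin

datatype dir = MoveL | MoveR | Stay

definition mv :: "dir \<Rightarrow> int" where
  "mv d = (case d of MoveL \<Rightarrow> -1 | MoveR \<Rightarrow> 1 | Stay \<Rightarrow> 0)"

datatype 'k hstate = St 'k | Yes | No | Halt

definition halted :: "'k hstate \<Rightarrow> bool" where
  "halted q = (case q of St _ \<Rightarrow> False | _ \<Rightarrow> True)"

datatype 'a result = RYes | RNo | RTape "'a list"

definition tape_segment :: "'b \<Rightarrow> (int \<Rightarrow> 'b) \<Rightarrow> 'b list" where
  "tape_segment b t =
     (if {i. t i \<noteq> b} = {} then []
      else map t [Min {i. t i \<noteq> b} .. Max {i. t i \<noteq> b}])"

definition input_tape :: "'b \<Rightarrow> 'b list \<Rightarrow> int \<Rightarrow> 'b" where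
  "input_tape b x i = (if 0 \<le> i \<and> i < int (length x) then x ! nat i else b)"

record ('k, 'a) tm =
  tm_start :: 'k
  tm_blank :: 'a
  tm_delta :: "'k \<Rightarrow> 'a \<Rightarrow> 'k hstate \<times> 'a \<times> dir"

type_synonym ('k, 'a) tm_conf = "'k hstate \<times> (int \<Rightarrow> 'a) \<times> int"

definition tm_step :: "('k, 'a) tm \<Rightarrow> ('k, 'a) tm_conf \<Rightarrow> ('k, 'a) tm_conf" where
  "tm_step M cf = (case cf of (q, t, pos) \<Rightarrow>
     (case q of
        St k \<Rightarrow> (case tm_delta M k (t pos) of (p, a, D) \<Rightarrow> (p, t(pos := a), pos + mv D))
      | _ \<Rightarrow> cf))"

definition tm_init :: "('k, 'a) tm \<Rightarrow> 'a list \<Rightarrow> ('k, 'a) tm_conf" where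
  "tm_init M x = (St (tm_start M), input_tape (tm_blank M) x, -1)"

definition tm_run :: "('k, 'a) tm \<Rightarrow> 'a list \<Rightarrow> nat \<Rightarrow> ('k, 'a) tm_conf" where
  "tm_run M x k = (tm_step M ^^ k) (tm_init M x)"

definition tm_halts_within :: "('k, 'a) tm \<Rightarrow> 'a list \<Rightarrow> nat \<Rightarrow> bool" where
  "tm_halts_within M x T = (\<exists>k\<le>T. halted (fst (tm_run M x k)))"

definition tm_conf_result :: "('k, 'a) tm \<Rightarrow> ('k, 'a) tm_conf \<Rightarrow> 'a result" where
  "tm_conf_result M cf = (case cf of (q, t, pos) \<Rightarrow>
     (case q of Yes \<Rightarrow> RYes | No \<Rightarrow> RNo | Halt \<Rightarrow> RTape (tape_segment (tm_blank M) t)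
      | St _ \<Rightarrow> undefined))"

definition tm_output :: "('k, 'a) tm \<Rightarrow> 'a list \<Rightarrow> 'a result" where
  "tm_output M x = tm_conf_result M (tm_run M x (LEAST k. halted (fst (tm_run M x k))))"

definition valid_input :: "('k, 'a) tm \<Rightarrow> 'a list \<Rightarrow> bool" where
  "valid_input M x = (\<forall>a\<in>set x. a \<noteq> tm_blank M)"

text \<open>Classical outcome labels: the two distinguished outcomes for the blank test,
  plus further labels.\<close>
datatype outc = OBlank | ONotBlank | OSym nat

text \<open>A one-cell operator on C^{|Sigma_Q|}, given by its matrix entries
  (row, column) indexed by quantum symbols.\<close>
type_synonym 'b qop = "'b \<Rightarrow> 'b \<Rightarrow> complex"

type_synonym 'b qfam = "outc \<Rightarrow> 'b qop"

record 'b cqtm =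
  cq_states   :: "nat set"
  cq_start    :: nat
  cq_outcomes :: "outc set"
  cq_alpha    :: "'b set"
  cq_blank    :: 'b
  cq_adm      :: "'b qfam set"
  cq_delta    :: "nat \<Rightarrow> outc \<Rightarrow> nat hstate \<times> dir \<times> 'b qfam"

definition admissible :: "outc set \<Rightarrow> 'b set \<Rightarrow> 'b qfam \<Rightarrow> bool" where
  "admissible SC SQ A \<longleftrightarrow>
     (\<forall>c. c \<notin> SC \<longrightarrow> (\<forall>r s. A c r s = 0)) \<and>
     (\<forall>c r s. r \<notin> SQ \<or> s \<notin> SQ \<longrightarrow> A c r s = 0) \<and>
     (\<forall>s\<in>SQ. \<forall>s'\<in>SQ.
        (\<Sum>c\<in>SC. \<Sum>r\<in>SQ. cnj (A c r s) * A c r s') = (if s = s' then 1 else 0))"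

definition blank_test :: "'b set \<Rightarrow> 'b \<Rightarrow> 'b qfam" where
  "blank_test SQ b c = (case c of
       OBlank \<Rightarrow> (\<lambda>r s. if r = b \<and> s = b then 1 else 0)
     | ONotBlank \<Rightarrow> (\<lambda>r s. if r = s \<and> r \<in> SQ \<and> r \<noteq> b then 1 else 0)
     | OSym _ \<Rightarrow> (\<lambda>r s. 0))"

definition wf_cqtm :: "'b cqtm \<Rightarrow> bool" where
  "wf_cqtm Q \<longleftrightarrow>
     finite (cq_states Q) \<and> cq_start Q \<in> cq_states Q \<and>
     finite (cq_outcomes Q) \<and> OBlank \<in> cq_outcomes Q \<and> ONotBlank \<in> cq_outcomes Q \<and>
     finite (cq_alpha Q) \<and> cq_blank Q \<in> cq_alpha Q \<and>
     finite (cq_adm Q) \<and>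
     (\<forall>A\<in>cq_adm Q. admissible (cq_outcomes Q) (cq_alpha Q) A) \<and>
     blank_test (cq_alpha Q) (cq_blank Q) \<in> cq_adm Q \<and>
     (\<forall>q\<in>cq_states Q. \<forall>c\<in>cq_outcomes Q.
        case cq_delta Q q c of (p, D, A) \<Rightarrow>
          (p \<in> St ` cq_states Q \<or> p = Yes \<or> p = No \<or> p = Halt) \<and> A \<in> cq_adm Q)"

text \<open>Tape states: (finitely supported) vectors over the basis of tape configurations.\<close>
type_synonym 'b qtape = "(int \<Rightarrow> 'b) \<Rightarrow> complex"

definition qnorm :: "'b qtape \<Rightarrow> real" where
  "qnorm \<psi> = sqrt (\<Sum>t\<in>{t. \<psi> t \<noteq> 0}. (cmod (\<psi> t))\<^sup>2)"

definition apply_op :: "'b set \<Rightarrow> 'b qop \<Rightarrow> int \<Rightarrow> 'b qtape \<Rightarrow> 'b qtape" where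
  "apply_op SQ M p \<psi> = (\<lambda>t. \<Sum>s\<in>SQ. M (t p) s * \<psi> (t(p := s)))"

definition qscale :: "complex \<Rightarrow> 'b qtape \<Rightarrow> 'b qtape" where
  "qscale a \<psi> = (\<lambda>t. a * \<psi> t)"

definition basis_tape :: "(int \<Rightarrow> 'b) \<Rightarrow> 'b qtape" where
  "basis_tape t0 = (\<lambda>t. if t = t0 then 1 else 0)"

text \<open>Configurations: classical state, head position, last outcome, tape state.\<close>
type_synonym 'b cq_conf = "nat hstate \<times> int \<times> outc \<times> 'b qtape"

definition cq_succ :: "'b cqtm \<Rightarrow> 'b cq_conf \<Rightarrow> 'b cq_conf \<Rightarrow> bool" where
  "cq_succ Q cf cf' \<longleftrightarrow>
     (\<exists>q pos c \<psi> p D A c'.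
        cf = (St q, pos, c, \<psi>) \<and> cq_delta Q q c = (p, D, A) \<and> c' \<in> cq_outcomes Q \<and>
        (let \<psi>1 = apply_op (cq_alpha Q) (A c') (pos + mv D) \<psi> in
           (qnorm \<psi>1)\<^sup>2 > 0 \<and>
           cf' = (p, pos + mv D, c', qscale (complex_of_real (1 / qnorm \<psi>1)) \<psi>1)))"

definition cq_init :: "'b cqtm \<Rightarrow> 'b list \<Rightarrow> 'b cq_conf" where
  "cq_init Q x = (St (cq_start Q), -1, OBlank, basis_tape (input_tape (cq_blank Q) x))"

text \<open>Configurations reachable with positive probability after exactly k steps.\<close>
inductive cq_reach :: "'b cqtm \<Rightarrow> 'b list \<Rightarrow> nat \<Rightarrow> 'b cq_conf \<Rightarrow> bool"
  for Q x where
  init: "cq_reach Q x 0 (cq_init Q x)"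
| step: "cq_reach Q x k cf \<Longrightarrow> cq_succ Q cf cf' \<Longrightarrow> cq_reach Q x (Suc k) cf'"

definition cq_halts_within :: "'b cqtm \<Rightarrow> 'b list \<Rightarrow> real \<Rightarrow> bool" where
  "cq_halts_within Q x T \<longleftrightarrow> (\<forall>k cf. cq_reach Q x k cf \<longrightarrow> real k \<le> T)"

text \<open>The output of a halting configuration equals r: yes/no by the halting state; for h,
  the tape is (up to global phase) the basis state whose segment between leftmost and
  rightmost non-blank cells is the string w.\<close>
definition cq_conf_output_is :: "'b cqtm \<Rightarrow> 'b cq_conf \<Rightarrow> 'b result \<Rightarrow> bool" where
  "cq_conf_output_is Q cf r \<longleftrightarrow>
     (case cf of (q, pos, c, \<psi>) \<Rightarrow>
        (q = Yes \<and> r = RYes) \<or> (q = No \<and> r = RNo) \<or>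
        (q = Halt \<and> (\<exists>w. r = RTape w \<and>
            (\<exists>\<alpha> t. cmod \<alpha> = 1 \<and> \<psi> = qscale \<alpha> (basis_tape t) \<and>
                    tape_segment (cq_blank Q) t = w))))"

definition cq_output_is :: "'b cqtm \<Rightarrow> 'b list \<Rightarrow> 'b result \<Rightarrow> bool" where
  "cq_output_is Q x r \<longleftrightarrow>
     (\<exists>T. cq_halts_within Q x T) \<and>
     (\<forall>k q pos c \<psi>. cq_reach Q x k (q, pos, c, \<psi>) \<longrightarrow> halted q \<longrightarrow>
         cq_conf_output_is Q (q, pos, c, \<psi>) r)"

definition map_result :: "('a \<Rightarrow> 'b) \<Rightarrow> 'a result \<Rightarrow> 'b result" where
  "map_result g r = (case r of RYes \<Rightarrow> RYes | RNo \<Rightarrow> RNo | RTape w \<Rightarrow> RTape (map g w))"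

end

(* A classical step reads the scanned cell, overwrites it and moves the head. The quantum machine
   performs it in two steps on basis states: it first moves the head and measures the cell in the
   computational basis, which leaves a basis state unchanged and reports the scanned symbol as the
   classical outcome; knowing the state and that symbol, it then applies the family
   {|b><a| : a}, which writes the symbol b prescribed by the transition. Started on |x>, the quantum
   tape therefore stays the basis state of the classical tape, every step has a single outcome of
   probability one, and the machine halts, with the classical output, after at most twice as many
   steps as M_C. *)

theory Submission
  imports Defs "HOL-Library.Countable"
begin

instance dir :: finite
proof
  have "UNIV = {MoveL, MoveR, Stay}"
    using dir.exhaust by blast
  then show "finite (UNIV :: dir set)"
    by (metis finite.emptyI finite.insertI)
qed

(* M_c = |g s><s| for c = OSym (code s), s in SQ: measure the cell, then replace s by g s. *)
definition measure_map :: "'b set \<Rightarrow> ('b \<Rightarrow> nat) \<Rightarrow> ('b \<Rightarrow> 'b) \<Rightarrow> 'b qfam" where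
  "measure_map SQ code g c r s = (if s \<in> SQ \<and> c = OSym (code s) \<and> r = g s then 1 else 0)"

lemma admissible_measure_map:
  assumes "finite SQ" "finite SC" "inj_on code SQ" "g ` SQ \<subseteq> SQ" "OSym ` code ` SQ \<subseteq> SC"
  shows "admissible SC SQ (measure_map SQ code g)"
  unfolding admissible_def
proof (intro conjI ballI allI impI)
  fix s s' assume s: "s \<in> SQ" and s': "s' \<in> SQ"
  let ?M = "measure_map SQ code g"
  have "(\<Sum>r\<in>SQ. cnj (?M c r s) * ?M c r s') = (if c = OSym (code s) \<and> s = s' then 1 else 0)" for c
  proof -
    have "cnj (?M c r s) * ?M c r s' =
        (if r = g s then (if c = OSym (code s) \<and> s = s' then 1 else 0) else 0)" for r
      using s s' assms(3) by (auto simp: measure_map_def dest: inj_onD)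
    then show ?thesis
      using assms(1,4) s by auto
  qed
  then show "(\<Sum>c\<in>SC. \<Sum>r\<in>SQ. cnj (?M c r s) * ?M c r s') = (if s = s' then 1 else 0)"
    using assms(2,5) s by auto
qed (use assms(4,5) in \<open>auto simp: measure_map_def\<close>)

lemma admissible_blank_test:
  assumes "finite SQ" "finite SC" "b \<in> SQ" "OBlank \<in> SC" "ONotBlank \<in> SC"
  shows "admissible SC SQ (blank_test SQ b)"
  unfolding admissible_def
proof (intro conjI ballI allI impI)
  fix s s' assume s: "s \<in> SQ" and s': "s' \<in> SQ"
  let ?T = "blank_test SQ b"
  let ?G = "\<lambda>c. \<Sum>r\<in>SQ. cnj (?T c r s) * ?T c r s'"
  have "(\<Sum>c\<in>SC. ?G c) = (\<Sum>c\<in>{OBlank, ONotBlank}. ?G c)"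
    by (rule sum.mono_neutral_right) (use assms in \<open>auto simp: blank_test_def split: outc.splits\<close>)
  also have "\<dots> = (if s = s' then 1 else 0)"
  proof -
    have "cnj (?T OBlank r s) * ?T OBlank r s' =
        (if r = b then (if s = b \<and> s' = b then 1 else 0) else 0)" for r
      by (simp add: blank_test_def)
    then have "?G OBlank = (if s = b \<and> s' = b then 1 else 0)"
      using assms(1,3) by simp
    moreover have "cnj (?T ONotBlank r s) * ?T ONotBlank r s' =
        (if r = s then (if s = s' \<and> s \<noteq> b then 1 else 0) else 0)" for r
      using s by (auto simp: blank_test_def)
    then have "?G ONotBlank = (if s = s' \<and> s \<noteq> b then 1 else 0)"
      using assms(1) s by simp
    ultimately show ?thesis
      by auto
  qed
  finally show "(\<Sum>c\<in>SC. ?G c) = (if s = s' then 1 else 0)" .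
qed (use assms in \<open>auto simp: blank_test_def split: outc.splits\<close>)

lemma qnorm_basis_tape [simp]: "qnorm (basis_tape t) = 1"
proof -
  have "{t'. basis_tape t t' \<noteq> 0} = {t}"
    by (auto simp: basis_tape_def)
  then show ?thesis
    by (simp add: qnorm_def basis_tape_def)
qed

lemma apply_op_basis_tape:
  assumes "finite SQ" "u p \<in> SQ"
  shows "apply_op SQ M p (basis_tape u) = (\<lambda>t. if t(p := u p) = u then M (t p) (u p) else 0)"
proof
  fix t
  have "M (t p) s * basis_tape u (t(p := s)) =
      (if s = u p then (if t(p := u p) = u then M (t p) (u p) else 0) else 0)" for s
    unfolding basis_tape_def by (auto dest: fun_cong[where x = p])
  then show "apply_op SQ M p (basis_tape u) t = (if t(p := u p) = u then M (t p) (u p) else 0)"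
    using assms by (simp add: apply_op_def)
qed

lemma apply_op_measure_map_basis_tape:
  assumes "finite SQ" "u p \<in> SQ"
  shows "apply_op SQ (measure_map SQ code g c) p (basis_tape u) =
    (if c = OSym (code (u p)) then basis_tape (u(p := g (u p))) else (\<lambda>_. 0))"
proof -
  have key: "(t(p := u p) = u \<and> t p = g (u p)) \<longleftrightarrow> t = u(p := g (u p))" for t
    by (auto simp: fun_eq_iff)
  show ?thesis
  proof (rule ext)
    fix t
    show "apply_op SQ (measure_map SQ code g c) p (basis_tape u) t =
      (if c = OSym (code (u p)) then basis_tape (u(p := g (u p))) else (\<lambda>_. 0)) t"
      unfolding apply_op_basis_tape[of SQ u p, OF assms] unfolding measure_map_def basis_tape_def
      using assms(2) key[of t] by auto
  qed
qed

lemma cq_succ_measure_map: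
  assumes succ: "cq_succ Q (St q, pos, c, basis_tape u) cf'"
    and delta: "cq_delta Q q c = (p, D, measure_map (cq_alpha Q) code g)"
    and "finite (cq_alpha Q)" "u (pos + mv D) \<in> cq_alpha Q"
  shows "cf' = (p, pos + mv D, OSym (code (u (pos + mv D))),
      basis_tape (u(pos + mv D := g (u (pos + mv D)))))"
proof -
  let ?P = "pos + mv D"
  obtain c' where "c' \<in> cq_outcomes Q"
    and pos: "(qnorm (apply_op (cq_alpha Q) (measure_map (cq_alpha Q) code g c') ?P
        (basis_tape u)))\<^sup>2 > 0"
    and cf': "cf' = (p, ?P, c', qscale (complex_of_real (1 / qnorm (apply_op (cq_alpha Q)
        (measure_map (cq_alpha Q) code g c') ?P (basis_tape u))))
        (apply_op (cq_alpha Q) (measure_map (cq_alpha Q) code g c') ?P (basis_tape u)))"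
    using succ delta unfolding cq_succ_def Let_def by auto
  have c': "c' = OSym (code (u ?P))"
  proof (rule ccontr)
    assume "c' \<noteq> OSym (code (u ?P))"
    then have "apply_op (cq_alpha Q) (measure_map (cq_alpha Q) code g c') ?P (basis_tape u) = (\<lambda>_. 0)"
      using assms(3,4) by (simp add: apply_op_measure_map_basis_tape)
    then show False
      using pos by (simp add: qnorm_def)
  qed
  then have "apply_op (cq_alpha Q) (measure_map (cq_alpha Q) code g c') ?P (basis_tape u) =
      basis_tape (u(?P := g (u ?P)))"
    using assms(3,4) by (simp add: apply_op_measure_map_basis_tape)
  then show ?thesis
    using cf' c' by (simp add: qscale_def)
qed

lemma tm_run_Suc: "tm_run M x (Suc j) = tm_step M (tm_run M x j)"
  by (simp add: tm_run_def)

lemma tm_run_halted_stable: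
  assumes "halted (fst (tm_run M x j))" "j \<le> k"
  shows "tm_run M x k = tm_run M x j"
  using assms(2)
proof (induction k rule: dec_induct)
  case (step k)
  then show ?case
    using assms(1)
    by (cases "tm_run M x j") (auto simp: tm_run_Suc tm_step_def halted_def split: hstate.splits)
qed simp

lemma tm_output_eq:
  assumes "halted (fst (tm_run M x j))"
  shows "tm_output M x = tm_conf_result M (tm_run M x j)"
proof -
  let ?L = "LEAST k. halted (fst (tm_run M x k))"
  have "halted (fst (tm_run M x ?L))" "?L \<le> j"
    using assms by (auto intro: LeastI Least_le)
  then have "tm_run M x j = tm_run M x ?L"
    by (rule tm_run_halted_stable)
  then show ?thesis
    by (simp add: tm_output_def)
qed

lemma tape_segment_comp:
  assumes "inj g"
  shows "tape_segment (g b) (g \<circ> t) = map g (tape_segment b t)"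
proof -
  have "{i. (g \<circ> t) i \<noteq> g b} = {i. t i \<noteq> b}"
    using assms by (auto dest: injD)
  then show ?thesis
    unfolding tape_segment_def by simp
qed

lemma input_tape_map: "input_tape (g b) (map g x) = g \<circ> input_tape b x"
  by (auto simp: input_tape_def fun_eq_iff)

(* Control states of the simulating machine are pairs (q, Some D), "move by D, then measure",
   and (q, None), "write what M does in state q on the measured symbol", coded as numbers. *)
definition move_state :: "'k::countable \<Rightarrow> dir \<Rightarrow> nat" where
  "move_state q D = to_nat (q, Some D)"

definition write_state :: "'k::countable \<Rightarrow> nat" where
  "write_state q = to_nat (q, None :: dir option)"

definition lift_state :: "dir \<Rightarrow> 'k::countable hstate \<Rightarrow> nat hstate" where
  "lift_state D = map_hstate (\<lambda>q. move_state q D)"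

lemma lift_state_simps [simp]:
  "lift_state D (St q) = St (move_state q D)"
  "lift_state D Yes = Yes" "lift_state D No = No" "lift_state D Halt = Halt"
  by (simp_all add: lift_state_def)

lemma lift_state_range:
  fixes p :: "'k::countable hstate"
  shows "lift_state D p \<in> St ` range (to_nat :: 'k \<times> dir option \<Rightarrow> nat) \<or>
    lift_state D p \<in> {Yes, No, Halt}"
  by (cases p) (simp_all add: move_state_def image_iff)

definition sym_outcome :: "'a::countable \<Rightarrow> outc" where
  "sym_outcome a = OSym (to_nat (Inl a :: 'a + nat))"

fun sim_delta :: "('k::finite, 'a::finite) tm \<Rightarrow> 'k \<times> dir option \<Rightarrow> outc \<Rightarrow>
    nat hstate \<times> dir \<times> ('a + nat) qfam" where
  "sim_delta M (q, Some D) c = (St (write_state q), D, measure_map (range Inl) to_nat id)"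
| "sim_delta M (q, None) (OSym n) =
    (case tm_delta M q (projl (from_nat n :: 'a + nat)) of (p, b, D) \<Rightarrow>
      (lift_state D p, Stay, measure_map (range Inl) to_nat (\<lambda>_. Inl b)))"
\<comment> \<open>unreachable: a write state is only entered with a symbol outcome\<close>
| "sim_delta M (q, None) _ = (Halt, Stay, measure_map (range Inl) to_nat id)"

definition sim_cqtm :: "('k::finite, 'a::finite) tm \<Rightarrow> ('a + nat) cqtm" where
  "sim_cqtm M =
    \<lparr>cq_states = range (to_nat :: 'k \<times> dir option \<Rightarrow> nat),
     cq_start = move_state (tm_start M) Stay,
     cq_outcomes = insert OBlank (insert ONotBlank (range (sym_outcome :: 'a \<Rightarrow> outc))),
     cq_alpha = range Inl,
     cq_blank = Inl (tm_blank M),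
     cq_adm = insert (blank_test (range Inl) (Inl (tm_blank M)))
       (insert (measure_map (range Inl) to_nat id)
         (range (\<lambda>b. measure_map (range Inl) to_nat (\<lambda>_. Inl b)))),
     cq_delta = (\<lambda>n. sim_delta M (from_nat n))\<rparr>"

lemma sim_cqtm_simps [simp]:
  "cq_alpha (sim_cqtm M) = range Inl"
  "cq_blank (sim_cqtm M) = Inl (tm_blank M)"
  "cq_start (sim_cqtm M) = move_state (tm_start M) Stay"
  "cq_delta (sim_cqtm M) (move_state q D) c = sim_delta M (q, Some D) c"
  "cq_delta (sim_cqtm M) (write_state q) c = sim_delta M (q, None) c"
  by (simp_all add: sim_cqtm_def move_state_def write_state_def)

lemma wf_sim_cqtm: "wf_cqtm (sim_cqtm (M :: ('k::finite, 'a::finite) tm))"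
proof -
  have outcomes: "OSym ` to_nat ` range (Inl :: 'a \<Rightarrow> 'a + nat) \<subseteq> cq_outcomes (sim_cqtm M)"
    by (auto simp: sim_cqtm_def sym_outcome_def)
  have "finite (cq_outcomes (sim_cqtm M))"
    by (simp add: sim_cqtm_def)
  then have "admissible (cq_outcomes (sim_cqtm M)) (range Inl) A" if "A \<in> cq_adm (sim_cqtm M)" for A
    using that outcomes
    by (auto simp: sim_cqtm_def intro!: admissible_blank_test admissible_measure_map)
  moreover have "case sim_delta M kd c of (p, D, A) \<Rightarrow>
      (p \<in> St ` cq_states (sim_cqtm M) \<or> p = Yes \<or> p = No \<or> p = Halt) \<and> A \<in> cq_adm (sim_cqtm M)"
    for kd c
    by (cases "(M, kd, c)" rule: sim_delta.cases)
      (use lift_state_range in \<open>auto simp: sim_cqtm_def write_state_def split: prod.splits\<close>)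
  ultimately show ?thesis
    unfolding wf_cqtm_def by (auto simp: sim_cqtm_def move_state_def)
qed

lemma sim_cqtm_measure_step:
  fixes M :: "('k::finite, 'a::finite) tm" and p :: "'k hstate"
  assumes "cq_succ (sim_cqtm M) (lift_state D p, pos - mv D, c, basis_tape (Inl \<circ> t)) cf'"
  shows "\<exists>q. p = St q \<and> cf' = (St (write_state q), pos, sym_outcome (t pos), basis_tape (Inl \<circ> t))"
proof -
  obtain q where p: "p = St q"
    using assms by (cases p) (auto simp: cq_succ_def)
  have "cq_delta (sim_cqtm M) (move_state q D) c =
      (St (write_state q), D, measure_map (cq_alpha (sim_cqtm M)) to_nat id)"
    by simp
  from cq_succ_measure_map[OF assms[unfolded p lift_state_simps] this]
  have "cf' = (St (write_state q), pos, sym_outcome (t pos), basis_tape (Inl \<circ> t))"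
    by (simp add: sym_outcome_def fun_upd_idem)
  with p show ?thesis
    by blast
qed

lemma sim_cqtm_write_step:
  fixes M :: "('k::finite, 'a::finite) tm"
  assumes "cq_succ (sim_cqtm M)
      (St (write_state q), pos, sym_outcome (t pos), basis_tape (Inl \<circ> t)) cf'"
    and "tm_delta M q (t pos) = (p, b, D)"
  shows "cf' = (lift_state D p, pos, sym_outcome (t pos), basis_tape (Inl \<circ> t(pos := b)))"
proof -
  have "cq_delta (sim_cqtm M) (write_state q) (sym_outcome (t pos)) =
      (lift_state D p, Stay, measure_map (cq_alpha (sim_cqtm M)) to_nat (\<lambda>_. Inl b))"
    using assms(2) by (simp add: sym_outcome_def)
  from cq_succ_measure_map[OF assms(1) this]
  show ?thesis
    by (simp add: sym_outcome_def mv_def fun_upd_comp)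
qed

inductive sim_inv :: "('k::finite, 'a::finite) tm \<Rightarrow> 'a list \<Rightarrow> nat \<Rightarrow> ('a + nat) cq_conf \<Rightarrow> bool"
  for M x where
  measure_phase: "tm_run M x j = (p, t, pos) \<Longrightarrow> \<forall>i<j. \<not> halted (fst (tm_run M x i)) \<Longrightarrow>
    sim_inv M x (2 * j) (lift_state D p, pos - mv D, c, basis_tape (Inl \<circ> t))"
| write_phase: "tm_run M x j = (St q, t, pos) \<Longrightarrow> \<forall>i<j. \<not> halted (fst (tm_run M x i)) \<Longrightarrow>
    sim_inv M x (2 * j + 1) (St (write_state q), pos, sym_outcome (t pos), basis_tape (Inl \<circ> t))"

lemma sim_inv_init:
  fixes M :: "('k::finite, 'a::finite) tm"
  shows "sim_inv M x 0 (cq_init (sim_cqtm M) (map Inl x))"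
proof -
  have "tm_run M x 0 = (St (tm_start M), input_tape (tm_blank M) x, -1 + mv Stay)"
    by (simp add: tm_run_def tm_init_def mv_def)
  then have "sim_inv M x (2 * 0) (lift_state Stay (St (tm_start M)), (-1 + mv Stay) - mv Stay, OBlank,
      basis_tape (Inl \<circ> input_tape (tm_blank M) x))"
    by (rule measure_phase) simp
  then show ?thesis
    by (simp add: cq_init_def input_tape_map)
qed

lemma sim_inv_step:
  fixes M :: "('k::finite, 'a::finite) tm"
  assumes "sim_inv M x k cf" and succ: "cq_succ (sim_cqtm M) cf cf'"
  shows "sim_inv M x (Suc k) cf'"
  using assms(1)
proof cases
  case (measure_phase j p t pos D c)
  then obtain q where "p = St q"
    and "cf' = (St (write_state q), pos, sym_outcome (t pos), basis_tape (Inl \<circ> t))"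
    using sim_cqtm_measure_step succ by blast
  then show ?thesis
    using measure_phase sim_inv.write_phase[of M x j q t pos] by simp
next
  case (write_phase j q t pos)
  obtain p b D where delta: "tm_delta M q (t pos) = (p, b, D)"
    by (metis prod_cases3)
  have "tm_run M x (Suc j) = (p, t(pos := b), pos + mv D)"
    using write_phase delta by (simp add: tm_run_Suc tm_step_def)
  moreover have "\<forall>i<Suc j. \<not> halted (fst (tm_run M x i))"
    using write_phase by (auto simp: less_Suc_eq halted_def)
  ultimately have "sim_inv M x (2 * Suc j)
      (lift_state D p, (pos + mv D) - mv D, sym_outcome (t pos), basis_tape (Inl \<circ> t(pos := b)))"
    by (rule sim_inv.measure_phase)
  moreover have "cf' = (lift_state D p, pos, sym_outcome (t pos), basis_tape (Inl \<circ> t(pos := b)))"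
    using sim_cqtm_write_step delta succ write_phase by blast
  ultimately show ?thesis
    using write_phase by simp
qed

lemma sim_inv_reach:
  fixes M :: "('k::finite, 'a::finite) tm"
  assumes "cq_reach (sim_cqtm M) (map Inl x) k cf"
  shows "sim_inv M x k cf"
  using assms by induction (auto intro: sim_inv_init sim_inv_step)

lemma sim_cqtm_reach_steps_le:
  fixes M :: "('k::finite, 'a::finite) tm"
  assumes halted: "halted (fst (tm_run M x K))" and "cq_reach (sim_cqtm M) (map Inl x) k cf"
  shows "k \<le> 2 * K"
proof -
  have before_le: "j \<le> K" if "\<forall>i<j. \<not> halted (fst (tm_run M x i))" for j
    using that halted leI by blast
  from sim_inv_reach[OF assms(2)] show ?thesis
  proof cases
    case (measure_phase j)
    then show ?thesis
      using before_le by simp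
  next
    case (write_phase j q t pos)
    then have "\<forall>i<Suc j. \<not> halted (fst (tm_run M x i))"
      by (auto simp: less_Suc_eq halted_def)
    then have "Suc j \<le> K"
      by (rule before_le)
    with write_phase show ?thesis
      by simp
  qed
qed

lemma sim_cqtm_halted_output:
  fixes M :: "('k::finite, 'a::finite) tm"
  assumes "cq_reach (sim_cqtm M) (map Inl x) k (q, pos, c, \<psi>)" and "halted q"
  shows "cq_conf_output_is (sim_cqtm M) (q, pos, c, \<psi>) (map_result Inl (tm_output M x))"
  using sim_inv_reach[OF assms(1)]
proof cases
  case (measure_phase j p t pos' D)
  then have q: "q = lift_state D p" and \<psi>: "\<psi> = basis_tape (Inl \<circ> t)"
    by simp_all
  with assms(2) have "halted p"
    by (cases p) (simp_all add: halted_def)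
  with measure_phase have classical_output: "tm_output M x = tm_conf_result M (p, t, pos')"
    using tm_output_eq[of M x j] by simp
  show ?thesis
  proof (cases p)
    case Halt
    have "\<psi> = qscale 1 (basis_tape (Inl \<circ> t))"
      using \<psi> by (simp add: qscale_def)
    moreover have "tape_segment (Inl (tm_blank M)) (Inl \<circ> t) = map Inl (tape_segment (tm_blank M) t)"
      by (simp add: tape_segment_comp)
    ultimately show ?thesis
      using Halt q classical_output
      by (auto simp: cq_conf_output_is_def tm_conf_result_def map_result_def
        intro!: exI[of _ "1 :: complex"] exI[of _ "Inl \<circ> t"])
  qed (use \<open>halted p\<close> q classical_output in \<open>simp_all add: cq_conf_output_is_def tm_conf_result_def
    map_result_def halted_def\<close>)
next
  case write_phase
  with assms(2) show ?thesis
    by (simp add: halted_def)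
qed

lemma sim_cqtm_halts_within:
  fixes M :: "('k::finite, 'a::finite) tm"
  assumes "tm_halts_within M x T"
  shows "cq_halts_within (sim_cqtm M) (map Inl x) (2 * real T)"
proof -
  obtain K where "K \<le> T" and halted: "halted (fst (tm_run M x K))"
    using assms unfolding tm_halts_within_def by blast
  have "real k \<le> 2 * real T" if "cq_reach (sim_cqtm M) (map Inl x) k cf" for k cf
  proof -
    have "k \<le> 2 * K"
      using halted that by (rule sim_cqtm_reach_steps_le)
    with \<open>K \<le> T\<close> have "real k \<le> real (2 * T)"
      by simp
    then show ?thesis
      by simp
  qed
  then show ?thesis
    unfolding cq_halts_within_def by blast
qed

theorem theorem1:
  fixes MC :: "('k::finite, 'a::finite) tm" and f :: "nat \<Rightarrow> nat"
  assumes "\<forall>x. valid_input MC x \<longrightarrow> tm_halts_within MC x (f (length x))"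
  shows "\<exists>MQ :: ('a + nat) cqtm.
           wf_cqtm MQ \<and> range Inl \<subseteq> cq_alpha MQ \<and> cq_blank MQ = Inl (tm_blank MC) \<and>
           (\<exists>C::real. \<exists>N. \<forall>x. valid_input MC x \<and> length x \<ge> N \<longrightarrow>
               cq_halts_within MQ (map Inl x) (C * real (f (length x)))) \<and>
           (\<forall>x. valid_input MC x \<longrightarrow>
               cq_output_is MQ (map Inl x) (map_result Inl (tm_output MC x)))"
proof -
  have halts: "cq_halts_within (sim_cqtm MC) (map Inl x) (2 * real (f (length x)))"
    if "valid_input MC x" for x
    using assms that by (simp add: sim_cqtm_halts_within)
  have correct: "cq_output_is (sim_cqtm MC) (map Inl x) (map_result Inl (tm_output MC x))"
    if "valid_input MC x" for x
    unfolding cq_output_is_def using halts[OF that] sim_cqtm_halted_output by blast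
  show ?thesis
  proof (intro exI[of _ "sim_cqtm MC"] conjI)
    show "\<exists>C::real. \<exists>N. \<forall>x. valid_input MC x \<and> length x \<ge> N \<longrightarrow>
        cq_halts_within (sim_cqtm MC) (map Inl x) (C * real (f (length x)))"
      using halts by blast
  qed (simp_all add: wf_sim_cqtm correct)
qed

end
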